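(* Let $G$ be a finite transitive permutation group with point stabiliser $H$ and let $p$ be a prime. Suppose there exists $T\le H$ such that (i) $N_G(T)\not\le H$, and (ii) for every $S\in\mathrm{Syl}_p(H)$, the group $\langle T,S\rangle$ contains a normal subgroup $H_0$ of $H$ which is weakly closed in $G$ and satisfies $H=N_G(H_0)$. Then $G$ has a subdegree divisible by $p$.
   Context: A subgroup $H_0$ of $H$ is weakly closed in $G$ if whenever $H_0^g\le H$ for some $g\in G$, there exists $h\in H$ with $H_0^g=H_0^h$. A subdegree is the size of an orbit of a point stabiliser. $\mathrm{Syl}_p(H)$ is the set of Sylow $p$-subgroups of $H$. *)

theory Defs
  imports "HOL-Algebra.Algebra" "HOL-Computational_Algebra.Factorial_Ring"
begin

definition Syl :: "nat \<Rightarrow> ('a, 'b) monoid_scheme \<Rightarrow> 'a set \<Rightarrow> 'a set set" where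
  "Syl p G K = {P. subgroup P (G\<lparr>carrier := K\<rparr>) \<and> card P = p ^ multiplicity p (card K)}"

definition weakly_closed :: "('a, 'b) monoid_scheme \<Rightarrow> 'a set \<Rightarrow> 'a set \<Rightarrow> bool" where
  "weakly_closed G H H0 \<longleftrightarrow> H0 \<subseteq> H \<and>
     (\<forall>g \<in> carrier G. (inv\<^bsub>G\<^esub> g) <#\<^bsub>G\<^esub> H0 #>\<^bsub>G\<^esub> g \<subseteq> H \<longrightarrow>
        (\<exists>h \<in> H. (inv\<^bsub>G\<^esub> g) <#\<^bsub>G\<^esub> H0 #>\<^bsub>G\<^esub> g = (inv\<^bsub>G\<^esub> h) <#\<^bsub>G\<^esub> H0 #>\<^bsub>G\<^esub> h))"

end

theory Submission
  imports Defs
begin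

text \<open>Suppose no subdegree is divisible by \<open>p\<close>. Pick \<open>g \<in> N\<^sub>G(T) - H\<close> and put
  \<open>\<beta> = g\<alpha>\<close>, so that \<open>G\<^sub>\<beta> = gHg\<inverse>\<close> contains \<open>gTg\<inverse> = T\<close>. By orbit-stabiliser,
  \<open>H\<^sub>\<beta>\<close> has index prime to \<open>p\<close> in \<open>H\<close>, so it contains some \<open>S \<in> Syl\<^sub>p(H)\<close>. Hence
  \<open>H\<^sub>0 \<le> \<langle>T,S\<rangle> \<le> gHg\<inverse>\<close>, i.e. \<open>g\<inverse>H\<^sub>0g \<le> H\<close>. Weak closure and normality of \<open>H\<^sub>0\<close> in \<open>H\<close>
  give \<open>g\<inverse>H\<^sub>0g = H\<^sub>0\<close>, so \<open>g \<in> N\<^sub>G(H\<^sub>0) = H\<close>, a contradiction.\<close>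

lemma (in group) conj_conj_inv:
  assumes "M \<subseteq> carrier G" "g \<in> carrier G"
  shows "g <# (inv g <# M #> g) #> inv g = M"
proof -
  have "inv g <# M \<subseteq> carrier G" using assms by (simp add: l_coset_subset_G)
  then have "g <# (inv g <# M #> g) = M #> g"
    using assms by (simp add: coset_assoc lcos_m_assoc lcos_mult_one)
  then show ?thesis
    using assms by (simp add: coset_mult_assoc)
qed

lemma (in group_action) mem_stabilizer_act_iff:
  assumes "g \<in> carrier G" "a \<in> E" "x \<in> carrier G"
  shows "x \<in> stabilizer G \<phi> (\<phi> g a) \<longleftrightarrow> inv g \<otimes> x \<otimes> g \<in> stabilizer G \<phi> a"
proof -
  interpret group G using group_hom group_hom.axioms(1) by blast
  have ga: "\<phi> g a \<in> E" using assms element_image by blast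
  have xga: "\<phi> x (\<phi> g a) \<in> E" using assms ga element_image by blast
  have "\<phi> (inv g \<otimes> x \<otimes> g) a = \<phi> (inv g) (\<phi> x (\<phi> g a))"
    using assms ga by (simp add: composition_rule)
  moreover have "\<phi> x (\<phi> g a) = \<phi> g a \<longleftrightarrow> \<phi> (inv g) (\<phi> x (\<phi> g a)) = a"
    using orbit_sym_aux[OF assms(1,2)] orbit_sym_aux[of "inv g" "\<phi> x (\<phi> g a)" a] assms xga
    by auto
  ultimately show ?thesis
    using assms unfolding stabilizer_def by auto
qed

lemma (in group_action) conj_subset_stabilizer_iff:
  assumes "M \<subseteq> carrier G" "g \<in> carrier G" "a \<in> E"
  shows "inv g <# M #> g \<subseteq> stabilizer G \<phi> a \<longleftrightarrow> M \<subseteq> stabilizer G \<phi> (\<phi> g a)"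
proof -
  have "inv g <# M #> g = (\<lambda>x. inv g \<otimes> x \<otimes> g) ` M"
    unfolding l_coset_def r_coset_def by auto
  then show ?thesis
    using assms(1) mem_stabilizer_act_iff[OF assms(2,3)] by (auto simp: subset_iff)
qed

lemma (in group) normal_conj_eq:
  assumes "normal N (G\<lparr>carrier := H\<rparr>)" "subgroup H G" "h \<in> H"
  shows "inv h <# N #> h = N"
proof -
  interpret N: normal N "G\<lparr>carrier := H\<rparr>" by fact
  have hG: "h \<in> carrier G" and NG: "N \<subseteq> carrier G"
    using assms subgroup.subset N.subset by force+
  have "N #> h = h <# N"
    using N.coset_eq assms(3) unfolding r_coset_def l_coset_def by simp
  then show ?thesis
    using hG NG by (simp add: coset_assoc[symmetric] lcos_m_assoc lcos_mult_one)
qed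

lemma (in group) weakly_closed_conj_into_imp_normalizer:
  assumes "weakly_closed G H H0" "normal H0 (G\<lparr>carrier := H\<rparr>)" "subgroup H G"
    and "g \<in> carrier G" "inv g <# H0 #> g \<subseteq> H"
  shows "g \<in> normalizer G H0"
proof -
  obtain h where "h \<in> H" "inv g <# H0 #> g = inv h <# H0 #> h"
    using assms(1,4,5) unfolding weakly_closed_def by blast
  then have "inv g <# H0 #> g = H0"
    using normal_conj_eq[OF assms(2,3)] by simp
  moreover have H0G: "H0 \<subseteq> carrier G"
    using assms(1,3) subgroup.subset unfolding weakly_closed_def by blast
  ultimately have "g <# H0 #> inv g = H0"
    using conj_conj_inv[OF H0G assms(4)] by simp
  then show ?thesis
    unfolding normalizer_def stabilizer_def using assms(4) H0G by simp
qed

lemma multiplicity_mult_coprime_left: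
  fixes p n k :: nat
  assumes "Factorial_Ring.prime p" "\<not> p dvd n" "k \<noteq> 0"
  shows "multiplicity p (n * k) = multiplicity p k"
proof -
  have "n \<noteq> 0" using assms(2) by (metis dvd_0_right)
  then show ?thesis
    using assms prime_elem_multiplicity_mult_distrib[of p n k] not_dvd_imp_multiplicity_0
    by (simp add: prime_imp_prime_elem)
qed

lemma (in group_action) exists_Syl_subset_stabilizer:
  assumes "finite (carrier G)" "Factorial_Ring.prime p" "x \<in> E" "\<not> p dvd card (orbit G \<phi> x)"
  shows "\<exists>P \<in> Syl p G (carrier G). P \<subseteq> stabilizer G \<phi> x"
proof -
  interpret group G using group_hom group_hom.axioms(1) by blast
  define K where "K = stabilizer G \<phi> x"
  have K: "subgroup K G" using stabilizer_subgroup[OF assms(3)] K_def by simp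
  have "finite K" using assms(1) K subgroup.subset finite_subset by metis
  then have "card K \<noteq> 0" using subgroup.one_closed[OF K] by auto
  then have mult: "multiplicity p (order G) = multiplicity p (card K)"
    using orbit_stabilizer_theorem[OF assms(3)] multiplicity_mult_coprime_left[OF assms(2,4)]
    unfolding K_def by metis
  obtain m where "card K = p ^ multiplicity p (card K) * m"
    using multiplicity_dvd[of p "card K"] by (metis dvdE)
  then obtain P where P: "subgroup P (G\<lparr>carrier := K\<rparr>)" "card P = p ^ multiplicity p (order G)"
    using sylow_thm[OF assms(2) subgroup_imp_group[OF K]] \<open>finite K\<close> mult
    by (auto simp: order_def)
  have "subgroup P G" using incl_subgroup[OF K P(1)] .
  moreover have "P \<subseteq> K" using P(1) subgroup.subset by fastforce
  ultimately show ?thesis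
    using P(2) unfolding Syl_def K_def order_def by auto
qed

theorem lemma2p2:
  fixes G (structure) and \<Omega> :: "'b set" and \<phi> :: "'a \<Rightarrow> 'b \<Rightarrow> 'b"
    and \<alpha> :: 'b and H T :: "'a set" and p :: nat
  assumes "faithful_action G \<Omega> \<phi>"
    and "transitive_action G \<Omega> \<phi>"
    and "finite (carrier G)"
    and "\<alpha> \<in> \<Omega>"
    and "H = stabilizer G \<phi> \<alpha>"
    and "Factorial_Ring.prime p"
    and "subgroup T (G\<lparr>carrier := H\<rparr>)"
    and "\<not> normalizer G T \<subseteq> H"
    and "\<forall>S \<in> Syl p G H. \<exists>H0. H0 \<subseteq> generate G (T \<union> S)
           \<and> normal H0 (G\<lparr>carrier := H\<rparr>) \<and> weakly_closed G H H0 \<and> H = normalizer G H0"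
  shows "\<exists>\<beta> \<in> \<Omega>. p dvd card (orbit (G\<lparr>carrier := H\<rparr>) \<phi> \<beta>)"
proof (rule ccontr)
  assume no_subdegree: "\<not> ?thesis"
  interpret group_action G \<Omega> \<phi> using assms(2) transitive_action.axioms(1) by blast
  interpret group G using group_hom group_hom.axioms(1) by blast
  have H: "subgroup H G" using assms(4,5) stabilizer_subgroup by simp
  interpret H_action: group_action "G\<lparr>carrier := H\<rparr>" \<Omega> \<phi> using induced_action[OF H] .
  obtain g where g: "g \<in> normalizer G T" "g \<notin> H" using assms(8) by blast
  have gG: "g \<in> carrier G" using g(1) unfolding normalizer_def stabilizer_def by simp
  have TG: "T \<subseteq> carrier G" using incl_subgroup[OF H assms(7)] subgroup.subset by blast
  define \<beta> where "\<beta> = \<phi> g \<alpha>"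
  have "\<beta> \<in> \<Omega>" using element_image gG assms(4) \<beta>_def by blast
  moreover have "finite H" using assms(3) H subgroup.subset finite_subset by metis
  ultimately obtain P where P: "P \<in> Syl p G H" "P \<subseteq> stabilizer G \<phi> \<beta>"
    using H_action.exists_Syl_subset_stabilizer[OF _ assms(6), of \<beta>] no_subdegree
      subgroup.subset[OF H] by (auto simp: Syl_def stabilizer_def)
  have "g <# T #> inv g = T" using g(1) TG unfolding normalizer_def stabilizer_def by simp
  then have "inv g <# T #> g = T" using conj_conj_inv[OF TG, of "inv g"] gG by simp
  then have "T \<subseteq> stabilizer G \<phi> \<beta>"
    using conj_subset_stabilizer_iff[OF TG gG assms(4)] subgroup.subset[OF assms(7)] assms(5) \<beta>_def
    by simp
  then have generate_fixes_\<beta>: "generate G (T \<union> P) \<subseteq> stabilizer G \<phi> \<beta>"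
    using generate_subgroup_incl stabilizer_subgroup[OF \<open>\<beta> \<in> \<Omega>\<close>] P(2) by blast
  obtain H0 where H0: "H0 \<subseteq> generate G (T \<union> P)" "normal H0 (G\<lparr>carrier := H\<rparr>)"
      "weakly_closed G H H0" "H = normalizer G H0"
    using assms(9) P(1) by blast
  have H0G: "H0 \<subseteq> carrier G" using H0(3) H subgroup.subset unfolding weakly_closed_def by blast
  have "inv g <# H0 #> g \<subseteq> H"
    using conj_subset_stabilizer_iff[OF H0G gG assms(4)] H0(1) generate_fixes_\<beta> assms(5) \<beta>_def by blast
  then have "g \<in> normalizer G H0"
    using weakly_closed_conj_into_imp_normalizer[OF H0(3,2) H gG] by blast
  then show False using H0(4) g(2) by simp
qed

end
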